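(* For any positive integer $g$, the number of numerical semigroups $\Lambda$ with genus $g$ satisfying $f(\Lambda) < 2 m(\Lambda)$ is $F_{g+1}$.
   Context: A numerical semigroup is a subset $\Lambda\subseteq\mathbb{N}_0$ closed under addition, containing $0$, with finite complement in $\mathbb{N}_0$. Its genus is $|\mathbb{N}_0\setminus\Lambda|$, its multiplicity $m(\Lambda)$ is its smallest nonzero element, and its Frobenius number $f(\Lambda)$ is the largest element of $\mathbb{N}_0\setminus\Lambda$. $F_n$ are the Fibonacci numbers: $F_1=F_2=1$, $F_{n+2}=F_{n+1}+F_n$. *)

theory Defs
  imports Main "HOL-Number_Theory.Fib"
begin

definition numerical_semigroup :: "nat set \<Rightarrow> bool" where
  "numerical_semigroup S \<longleftrightarrow> 0 \<in> S \<and> (\<forall>a\<in>S. \<forall>b\<in>S. a + b \<in> S) \<and> finite (UNIV - S)"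

definition ns_genus :: "nat set \<Rightarrow> nat" where
  "ns_genus S = card (UNIV - S)"

definition ns_multiplicity :: "nat set \<Rightarrow> nat" where
  "ns_multiplicity S = (LEAST x. x \<in> S \<and> x \<noteq> 0)"

definition ns_frobenius :: "nat set \<Rightarrow> nat" where
  "ns_frobenius S = Max (UNIV - S)"

end

theory Submission
  imports Defs
begin

text \<open>If the Frobenius number is below \<open>2m\<close>, every sum of two nonzero elements is \<open>\<ge> 2m\<close> and hence
  lies in the semigroup, so the semigroup is determined by \<open>m\<close> and the set \<open>A\<close> of its gaps in
  \<open>(m, 2m)\<close>, and conversely every pair \<open>(m, A)\<close> gives such a semigroup, of genus \<open>m - 1 + |A|\<close>.
  Counting the pairs with genus \<open>g\<close> gives \<open>\<Sum>\<^sub>m (m-1 choose g+1-m)\<close>, a diagonal sum of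
  Pascal's triangle, which is \<open>F\<^sub>g\<^sub>+\<^sub>1\<close>.\<close>

definition semigroup_of :: "nat \<Rightarrow> nat set \<Rightarrow> nat set" where
  "semigroup_of m A = {x. x = 0 \<or> (m \<le> x \<and> x \<notin> A)}"

lemma ns_multiplicity_le:
  assumes "x \<in> S" "x \<noteq> 0"
  shows "ns_multiplicity S \<le> x"
  unfolding ns_multiplicity_def using assms by (simp add: Least_le)

lemma ns_multiplicity_mem:
  assumes "numerical_semigroup S"
  shows "ns_multiplicity S \<in> S" and "ns_multiplicity S \<noteq> 0"
proof -
  have "\<exists>x. x \<in> S \<and> x \<noteq> 0"
  proof (rule ccontr)
    assume "\<not> ?thesis"
    then have "{1..} \<subseteq> UNIV - S" by auto
    with assms show False
      unfolding numerical_semigroup_def using infinite_Ici finite_subset by blast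
  qed
  then have "ns_multiplicity S \<in> S \<and> ns_multiplicity S \<noteq> 0"
    unfolding ns_multiplicity_def by (rule LeastI_ex)
  then show "ns_multiplicity S \<in> S" and "ns_multiplicity S \<noteq> 0" by auto
qed

lemma ns_frobenius_less_iff:
  assumes "numerical_semigroup S" "ns_genus S > 0"
  shows "ns_frobenius S < k \<longleftrightarrow> (\<forall>x\<ge>k. x \<in> S)"
proof -
  have "finite (UNIV - S)" using assms(1) by (simp add: numerical_semigroup_def)
  moreover have "UNIV - S \<noteq> {}"
    using assms(2) by (metis card.empty ns_genus_def less_irrefl)
  ultimately have "ns_frobenius S < k \<longleftrightarrow> (\<forall>a\<in>UNIV - S. a < k)"
    unfolding ns_frobenius_def by (rule Max_less_iff)
  also have "\<dots> \<longleftrightarrow> (\<forall>x\<ge>k. x \<in> S)"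
    by (metis Diff_iff UNIV_I not_le)
  finally show ?thesis .
qed

lemma gaps_semigroup_of:
  assumes "A \<subseteq> {m<..<2*m}" "m \<ge> 1"
  shows "UNIV - semigroup_of m A = {1..<m} \<union> A"
  using assms by (auto simp: semigroup_of_def)

lemma numerical_semigroup_semigroup_of:
  assumes "A \<subseteq> {m<..<2*m}" "m \<ge> 1"
  shows "numerical_semigroup (semigroup_of m A)"
  unfolding numerical_semigroup_def gaps_semigroup_of[OF assms]
  using assms finite_subset[OF assms(1)] by (auto simp: semigroup_of_def)

lemma ns_genus_semigroup_of:
  assumes "A \<subseteq> {m<..<2*m}" "m \<ge> 1"
  shows "ns_genus (semigroup_of m A) = m - 1 + card A"
proof -
  have "{1..<m} \<inter> A = {}" using assms by auto
  then show ?thesis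
    unfolding ns_genus_def gaps_semigroup_of[OF assms]
    using finite_subset[OF assms(1)] by (simp add: card_Un_disjoint)
qed

lemma ns_multiplicity_semigroup_of:
  assumes "A \<subseteq> {m<..<2*m}" "m \<ge> 1"
  shows "ns_multiplicity (semigroup_of m A) = m"
  unfolding ns_multiplicity_def
  by (rule Least_equality) (use assms in \<open>auto simp: semigroup_of_def\<close>)

lemma semigroup_of_eq:
  assumes "numerical_semigroup S" and above: "\<forall>x\<ge>2 * ns_multiplicity S. x \<in> S"
  defines "m \<equiv> ns_multiplicity S"
  shows "S = semigroup_of m ({m<..<2*m} - S)"
proof (rule set_eqI)
  fix x
  have "0 \<in> S" using assms(1) by (simp add: numerical_semigroup_def)
  moreover have "m \<in> S" using ns_multiplicity_mem[OF assms(1)] by (simp add: m_def)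
  moreover have "x \<in> S \<Longrightarrow> x \<noteq> 0 \<Longrightarrow> m \<le> x" by (simp add: m_def ns_multiplicity_le)
  ultimately show "x \<in> S \<longleftrightarrow> x \<in> semigroup_of m ({m<..<2*m} - S)"
    using above by (cases "x < 2 * m") (auto simp: semigroup_of_def m_def)
qed

lemma diff_semigroup_of:
  assumes "A \<subseteq> {m<..<2*m}"
  shows "{m<..<2*m} - semigroup_of m A = A"
  using assms by (auto simp: semigroup_of_def)

lemma bij_betw_semigroup_of:
  assumes "g > 0"
  shows "bij_betw (\<lambda>(m, A). semigroup_of m A)
           (SIGMA m:{1..g+1}. {A. A \<subseteq> {m<..<2*m} \<and> card A = g + 1 - m})
           {S. numerical_semigroup S \<and> ns_genus S = g \<and> ns_frobenius S < 2 * ns_multiplicity S}"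
    (is "bij_betw _ ?P ?T")
proof -
  have semigroup_of_mem: "semigroup_of m A \<in> ?T" if "(m, A) \<in> ?P" for m A
  proof -
    from that have m: "m \<ge> 1" "m \<le> g + 1" and A: "A \<subseteq> {m<..<2*m}" "card A = g + 1 - m"
      by auto
    note facts = numerical_semigroup_semigroup_of[OF A(1) m(1)]
      ns_genus_semigroup_of[OF A(1) m(1)] ns_multiplicity_semigroup_of[OF A(1) m(1)]
    with m A assms have "ns_genus (semigroup_of m A) = g" "ns_genus (semigroup_of m A) > 0"
      by simp_all
    with facts m A show ?thesis
      by (auto simp: ns_frobenius_less_iff semigroup_of_def)
  qed
  have decompose: "S = semigroup_of m ({m<..<2*m} - S) \<and> (m, {m<..<2*m} - S) \<in> ?P"
    if "S \<in> ?T" and m_def: "m = ns_multiplicity S" for S m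
  proof -
    have S: "numerical_semigroup S" "ns_genus S = g" "ns_frobenius S < 2 * m"
      using that by auto
    have "\<forall>x\<ge>2 * m. x \<in> S"
      using S assms by (simp add: ns_frobenius_less_iff)
    then have eq: "S = semigroup_of m ({m<..<2*m} - S)"
      using semigroup_of_eq[OF S(1)] by (simp add: m_def)
    have "m \<ge> 1" using ns_multiplicity_mem(2)[OF S(1)] by (simp add: m_def)
    then have "g = m - 1 + card ({m<..<2*m} - S)"
      using S(2) eq ns_genus_semigroup_of[of "{m<..<2*m} - S" m] by auto
    with \<open>m \<ge> 1\<close> eq show ?thesis by auto
  qed
  show ?thesis
    by (rule bij_betw_byWitness[where f' = "\<lambda>S. (ns_multiplicity S,
                                 {ns_multiplicity S<..<2 * ns_multiplicity S} - S)"])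
      (use semigroup_of_mem decompose in
        \<open>auto simp: ns_multiplicity_semigroup_of diff_semigroup_of\<close>)
qed

lemma sum_choose_diagonal_fib:
  "(\<Sum>m=1..n+1. (m - 1) choose (n + 1 - m)) = fib (n + 1)"
proof -
  have "(\<Sum>m=1..n+1. (m - 1) choose (n + 1 - m)) = (\<Sum>j=0..n. j choose (n - j))"
    using sum.shift_bounds_cl_Suc_ivl[of "\<lambda>m. (m - 1) choose (n + 1 - m)" 0 n] by simp
  also have "\<dots> = (\<Sum>k=0..n. (n - k) choose k)"
    by (subst sum.atLeastAtMost_rev) (auto intro: sum.cong)
  also have "\<dots> = fib (n + 1)" by (simp add: ne_diagonal_fib)
  finally show ?thesis .
qed

theorem proposition2p3:
  fixes g :: nat
  assumes "g > 0"
  shows "card {S. numerical_semigroup S \<and> ns_genus S = g \<and>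
                  ns_frobenius S < 2 * ns_multiplicity S} = fib (g + 1)"
proof -
  have "card {S. numerical_semigroup S \<and> ns_genus S = g \<and> ns_frobenius S < 2 * ns_multiplicity S}
      = card (SIGMA m:{1..g+1}. {A. A \<subseteq> {m<..<2*m} \<and> card A = g + 1 - m})"
    using bij_betw_same_card[OF bij_betw_semigroup_of[OF assms]] by simp
  also have "\<dots> = (\<Sum>m=1..g+1. card {A. A \<subseteq> {m<..<2*m} \<and> card A = g + 1 - m})"
    by (rule card_SigmaI) auto
  also have "\<dots> = (\<Sum>m=1..g+1. (m - 1) choose (g + 1 - m))"
    by (intro sum.cong refl) (simp add: n_subsets)
  also have "\<dots> = fib (g + 1)"
    by (rule sum_choose_diagonal_fib)
  finally show ?thesis .
qed

end
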